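(* Let $G=(V,E,w)$ be a connected weighted graph with $n$ vertices. Then $$ n\sum_{e\in E} w_e B_e^{2}=R_{\mathrm{tot}}. $$
   Context: $G=(V,E,w)$ is an undirected graph with positive edge weights $w_e$ and Laplacian $L=D-A$ (weighted degree matrix minus weighted adjacency matrix); $L^{+}$ is its Moore–Penrose pseudoinverse, $L^{2+}=(L^+)^2$, and $1_v$ is the indicator vector of vertex $v$. The effective resistance is $R_{st}=(1_s-1_t)^{T}L^{+}(1_s-1_t)$ and the total resistance is $R_{\mathrm{tot}}=\sum_{\{s,t\}\subseteq V}R_{st}$, summed over unordered pairs of distinct vertices. The biharmonic distance is $B_{st}=\sqrt{(1_s-1_t)^{T}L^{2+}(1_s-1_t)}$, and $B_e:=B_{st}$ for an edge $e=\{s,t\}$. *)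

theory Defs
  imports "HOL-Analysis.Analysis"
begin

definition wgraph :: "'v set set \<Rightarrow> ('v set \<Rightarrow> real) \<Rightarrow> bool" where
  "wgraph E w \<longleftrightarrow> (\<forall>e\<in>E. \<exists>s t. s \<noteq> t \<and> e = {s, t}) \<and> (\<forall>e\<in>E. w e > 0)"

definition connected_graph :: "'v set set \<Rightarrow> bool" where
  "connected_graph E \<longleftrightarrow> (\<forall>s t. (\<lambda>x y. {x, y} \<in> E)\<^sup>*\<^sup>* s t)"

definition adj_matrix :: "('v::finite) set set \<Rightarrow> ('v set \<Rightarrow> real) \<Rightarrow> real^'v^'v" where
  "adj_matrix E w = (\<chi> i j. if {i, j} \<in> E then w {i, j} else 0)"

definition laplacian :: "('v::finite) set set \<Rightarrow> ('v set \<Rightarrow> real) \<Rightarrow> real^'v^'v" where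
  "laplacian E w =
     (\<chi> i j. (if i = j then (\<Sum>k\<in>UNIV. adj_matrix E w $ i $ k) else 0) - adj_matrix E w $ i $ j)"

definition pinv :: "real^'n^'n \<Rightarrow> real^'n^'n" where
  "pinv A = (THE X. A ** X ** A = A \<and> X ** A ** X = X \<and>
                    transpose (A ** X) = A ** X \<and> transpose (X ** A) = X ** A)"

definition indicator_vec :: "'v::finite \<Rightarrow> real^'v" where
  "indicator_vec v = axis v 1"

definition qform_pair :: "real^'v^'v \<Rightarrow> 'v::finite \<Rightarrow> 'v \<Rightarrow> real" where
  "qform_pair M s t = (indicator_vec s - indicator_vec t) \<bullet> (M *v (indicator_vec s - indicator_vec t))"

definition eff_res :: "('v::finite) set set \<Rightarrow> ('v set \<Rightarrow> real) \<Rightarrow> 'v \<Rightarrow> 'v \<Rightarrow> real" where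
  "eff_res E w s t = qform_pair (pinv (laplacian E w)) s t"

definition biharm :: "('v::finite) set set \<Rightarrow> ('v set \<Rightarrow> real) \<Rightarrow> 'v \<Rightarrow> 'v \<Rightarrow> real" where
  "biharm E w s t = sqrt (qform_pair (pinv (laplacian E w) ** pinv (laplacian E w)) s t)"

text \<open>Endpoints of an unordered pair (both quantities used are symmetric in s,t).\<close>
definition endpoints :: "'v set \<Rightarrow> 'v \<times> 'v" where
  "endpoints e = (SOME p. fst p \<noteq> snd p \<and> e = {fst p, snd p})"

definition biharm_edge :: "('v::finite) set set \<Rightarrow> ('v set \<Rightarrow> real) \<Rightarrow> 'v set \<Rightarrow> real" where
  "biharm_edge E w e = biharm E w (fst (endpoints e)) (snd (endpoints e))"

definition total_res :: "('v::finite) set set \<Rightarrow> ('v set \<Rightarrow> real) \<Rightarrow> real" where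
  "total_res E w = (\<Sum>p\<in>{{s, t} | s t. s \<noteq> t}. eff_res E w (fst (endpoints p)) (snd (endpoints p)))"

end

theory Submission
  imports Defs
begin

text \<open>
  Write \<open>b\<^sub>s\<^sub>t = 1\<^sub>s - 1\<^sub>t\<close>, \<open>P = L\<^sup>+\<close> and \<open>J = 1 1\<^sup>T / n\<close>. Since \<open>L = \<Sum>\<^sub>e w\<^sub>e b\<^sub>e b\<^sub>e\<^sup>T\<close>,
  the weighted sum of squared biharmonic distances over the edges is
  \<open>tr (L P\<^sup>2) = tr (P L P) = tr P\<close>. Summing \<open>b\<^sub>s\<^sub>t\<^sup>T P b\<^sub>s\<^sub>t\<close> over all pairs gives
  \<open>R\<^sub>t\<^sub>o\<^sub>t = n tr P - 1\<^sup>T P 1\<close>, and \<open>P 1 = 0\<close>: for a connected graph the kernel of \<open>L\<close>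
  is spanned by \<open>1\<close>, so \<open>L + J\<close> is invertible and \<open>P = (L + J)\<^sup>-\<^sup>1 - J\<close>.
\<close>

definition moore_penrose :: "real^'n^'n \<Rightarrow> real^'n^'n \<Rightarrow> bool" where
  "moore_penrose A X \<longleftrightarrow> A ** X ** A = A \<and> X ** A ** X = X \<and>
     transpose (A ** X) = A ** X \<and> transpose (X ** A) = X ** A"

lemma moore_penrose_unique:
  fixes A X Y :: "real^'n^'n"
  assumes "moore_penrose A X" "moore_penrose A Y"
  shows "X = Y"
proof -
  have X: "A ** X ** A = A" "X ** A ** X = X" "transpose (A ** X) = A ** X" "transpose (X ** A) = X ** A"
    and Y: "A ** Y ** A = A" "Y ** A ** Y = Y" "transpose (A ** Y) = A ** Y" "transpose (Y ** A) = Y ** A"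
    using assms unfolding moore_penrose_def by auto
  have AY: "transpose A = transpose A ** transpose Y ** transpose A"
    by (metis Y(1) matrix_transpose_mul matrix_mul_assoc)
  have AX: "transpose A = transpose A ** transpose X ** transpose A"
    by (metis X(1) matrix_transpose_mul matrix_mul_assoc)
  have "X = X ** transpose X ** transpose A"
    by (metis X(2) X(3) matrix_transpose_mul matrix_mul_assoc)
  also have "\<dots> = X ** (transpose X ** transpose A) ** (transpose Y ** transpose A)"
    by (metis AY matrix_mul_assoc)
  also have "\<dots> = X ** (A ** X) ** (A ** Y)"
    by (metis X(3) Y(3) matrix_transpose_mul)
  also have "\<dots> = X ** A ** Y"
    by (metis X(2) matrix_mul_assoc)
  finally have XAY: "X = X ** A ** Y" .
  have "Y = transpose A ** transpose Y ** Y"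
    by (metis Y(2) Y(4) matrix_transpose_mul)
  also have "\<dots> = (transpose A ** transpose X) ** (transpose A ** transpose Y) ** Y"
    by (metis AX matrix_mul_assoc)
  also have "\<dots> = (X ** A) ** (Y ** A) ** Y"
    by (metis X(4) Y(4) matrix_transpose_mul)
  also have "\<dots> = X ** A ** Y"
    by (metis Y(2) matrix_mul_assoc)
  finally show ?thesis using XAY by simp
qed

lemma pinv_eqI:
  assumes "moore_penrose A X"
  shows "pinv A = X"
proof -
  have "pinv A = (THE X. moore_penrose A X)" unfolding pinv_def moore_penrose_def ..
  also have "\<dots> = X"
    by (rule the_equality[where P = "moore_penrose A", OF assms])
      (erule moore_penrose_unique[OF _ assms])
  finally show ?thesis .
qed

lemma matrix_diff_ldistrib: "(A::'a::ring_1^'n^'m) ** (B - C) = A ** B - A ** C"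
  by (simp add: matrix_matrix_mult_def vec_eq_iff sum_subtractf algebra_simps)

lemma matrix_diff_rdistrib: "(B - C) ** (A::'a::ring_1^'n^'m) = B ** A - C ** A"
  by (simp add: matrix_matrix_mult_def vec_eq_iff sum_subtractf algebra_simps)

lemma matrix_add_rdistrib: "(B + C) ** (A::'a::semiring_1^'n^'m) = B ** A + C ** A"
  by (simp add: matrix_matrix_mult_def vec_eq_iff sum.distrib algebra_simps)

lemma transpose_add: "transpose ((A::'a::semiring_1^'n^'m) + B) = transpose A + transpose B"
  by (simp add: transpose_def vec_eq_iff)

lemma transpose_diff: "transpose ((A::'a::ring_1^'n^'m) - B) = transpose A - transpose B"
  by (simp add: transpose_def vec_eq_iff)

text \<open>
  If the orthogonal projection \<open>K\<close> onto the kernel of a symmetric \<open>A\<close> is known, the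
  pseudoinverse is obtained by inverting the regular matrix \<open>A + K\<close>.
\<close>

lemma moore_penrose_regularized_inverse:
  fixes A K B :: "real^'n^'n"
  assumes A: "transpose A = A" and K: "transpose K = K" "K ** K = K" and AK: "A ** K = 0"
    and B: "B ** (A + K) = mat 1"
  shows "moore_penrose A (B - K)" and "transpose (B - K) = B - K" and "(B - K) ** K = 0"
proof -
  let ?M = "A + K"
  have "K ** A = transpose (A ** K)" by (simp add: matrix_transpose_mul A K(1))
  then have KA: "K ** A = 0" by (simp add: AK transpose_def vec_eq_iff)
  have MB: "?M ** B = mat 1" using B matrix_left_right_inverse by blast
  have "B ** K = B ** (?M ** K)" by (simp add: matrix_add_rdistrib AK K(2))
  then have BK: "B ** K = K" by (simp add: matrix_mul_assoc B)
  have "K ** B = (K ** ?M) ** B" by (simp add: matrix_add_ldistrib KA K(2))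
  then have KB: "K ** B = K" by (simp add: matrix_mul_assoc[symmetric] MB)
  have "A ** B = mat 1 - K" using MB by (simp add: matrix_add_rdistrib KB algebra_simps)
  then have AP: "A ** (B - K) = mat 1 - K" by (simp add: matrix_diff_ldistrib AK)
  have "B ** A = mat 1 - K" using B by (simp add: matrix_add_ldistrib BK algebra_simps)
  then have PA: "(B - K) ** A = mat 1 - K" by (simp add: matrix_diff_rdistrib KA)
  have "transpose B ** ?M = transpose (?M ** B)"
    by (simp add: matrix_transpose_mul transpose_add A K(1))
  then have TBM: "transpose B ** ?M = mat 1" by (simp add: MB)
  have "transpose B = transpose B ** (?M ** B)" by (simp add: MB)
  also have "\<dots> = (transpose B ** ?M) ** B" by (rule matrix_mul_assoc)
  also have "\<dots> = B" by (simp add: TBM)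
  finally have "transpose B = B" .
  then show "transpose (B - K) = B - K" by (simp add: transpose_diff K(1))
  show "(B - K) ** K = 0" by (simp add: matrix_diff_rdistrib BK K(2))
  have "(B - K) ** A ** (B - K) = (mat 1 - K) ** (B - K)" by (simp only: PA)
  then have "(B - K) ** A ** (B - K) = B - K"
    by (simp add: matrix_diff_rdistrib matrix_diff_ldistrib KB K(2))
  moreover have "A ** (B - K) ** A = A" by (simp add: AP matrix_diff_rdistrib KA)
  moreover have "transpose (mat 1 - K) = mat 1 - K" by (simp add: transpose_diff K(1))
  ultimately show "moore_penrose A (B - K)" unfolding moore_penrose_def by (simp add: AP PA)
qed

definition averaging_matrix :: "real^'v^'v" where
  "averaging_matrix = (\<chi> i j. 1 / real CARD('v::finite))"

lemma transpose_averaging_matrix: "transpose averaging_matrix = averaging_matrix"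
  by (simp add: transpose_def averaging_matrix_def vec_eq_iff)

lemma averaging_matrix_idem: "averaging_matrix ** averaging_matrix = averaging_matrix"
  by (simp add: matrix_matrix_mult_def averaging_matrix_def vec_eq_iff power2_eq_square)

lemma row_sum_eq_0_if_mult_averaging_matrix:
  fixes P :: "real^'v::finite^'v"
  assumes "P ** averaging_matrix = 0"
  shows "(\<Sum>j\<in>UNIV. P $ i $ j) = 0"
proof -
  have "(P ** averaging_matrix) $ i $ i = 0" using assms by simp
  then show ?thesis
    by (simp add: matrix_matrix_mult_def averaging_matrix_def sum_divide_distrib[symmetric])
qed

lemma adj_matrix_commute: "adj_matrix E w $ i $ j = adj_matrix E w $ j $ i"
  by (simp add: adj_matrix_def insert_commute)

lemma sum_adj_matrix_swap:
  "(\<Sum>i\<in>UNIV. \<Sum>j\<in>UNIV. adj_matrix E w $ i $ j * f i j) =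
   (\<Sum>i\<in>UNIV. \<Sum>j\<in>UNIV. adj_matrix E w $ i $ j * f j i)"
  by (subst sum.swap) (simp add: adj_matrix_commute)

lemma laplacian_commute: "laplacian E w $ i $ j = laplacian E w $ j $ i"
  by (simp add: laplacian_def adj_matrix_commute)

lemma transpose_laplacian: "transpose (laplacian E w) = laplacian E w"
  by (simp add: transpose_def vec_eq_iff laplacian_commute[of E w])

lemma laplacian_row_sum: "(\<Sum>j\<in>UNIV. laplacian E w $ i $ j) = 0"
  by (simp add: laplacian_def sum_subtractf)

lemma laplacian_column_sum: "(\<Sum>i\<in>UNIV. laplacian E w $ i $ j) = 0"
  using laplacian_row_sum[of E w j] laplacian_commute[of E w _ j] by simp

lemma laplacian_mult_averaging_matrix: "laplacian E w ** averaging_matrix = 0"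
  by (simp add: matrix_matrix_mult_def averaging_matrix_def vec_eq_iff
      sum_divide_distrib[symmetric] laplacian_row_sum)

lemma laplacian_row_mult:
  "(\<Sum>j\<in>UNIV. laplacian E w $ i $ j * f j) = (\<Sum>j\<in>UNIV. adj_matrix E w $ i $ j * (f i - f j))"
proof -
  let ?A = "adj_matrix E w"
  have "laplacian E w $ i $ j * f j =
      (if i = j then (\<Sum>k\<in>UNIV. ?A $ i $ k) * f j else 0) - ?A $ i $ j * f j" for j
    by (simp add: laplacian_def left_diff_distrib)
  then have "(\<Sum>j\<in>UNIV. laplacian E w $ i $ j * f j) =
      (\<Sum>k\<in>UNIV. ?A $ i $ k) * f i - (\<Sum>j\<in>UNIV. ?A $ i $ j * f j)"
    by (simp add: sum_subtractf)
  then show ?thesis by (simp add: sum_distrib_right right_diff_distrib sum_subtractf)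
qed

lemma qform_pair_eq: "qform_pair M s t = M $ s $ s - M $ s $ t - M $ t $ s + M $ t $ t"
  unfolding qform_pair_def indicator_vec_def
  by (simp add: inner_diff_left inner_diff_right matrix_vector_mult_diff_distrib inner_axis'
      matrix_vector_mult_basis column_def)

text \<open>This is \<open>L = \<Sum>\<^sub>e w\<^sub>e b\<^sub>e b\<^sub>e\<^sup>T\<close>, each edge being counted once in each orientation.\<close>

lemma trace_laplacian_mult:
  "2 * trace (laplacian E w ** Q) =
   (\<Sum>i\<in>UNIV. \<Sum>j\<in>UNIV. adj_matrix E w $ i $ j * qform_pair Q i j)"
proof -
  let ?A = "adj_matrix E w"
  have "trace (laplacian E w ** Q) = (\<Sum>i\<in>UNIV. \<Sum>j\<in>UNIV. ?A $ i $ j * (Q $ i $ i - Q $ j $ i))"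
    by (simp add: trace_def matrix_matrix_mult_def laplacian_row_mult)
  moreover have "(\<Sum>i\<in>UNIV. \<Sum>j\<in>UNIV. ?A $ i $ j * (Q $ j $ j - Q $ i $ j)) =
      (\<Sum>i\<in>UNIV. \<Sum>j\<in>UNIV. ?A $ i $ j * (Q $ i $ i - Q $ j $ i))"
    by (rule sum_adj_matrix_swap)
  moreover have "(\<Sum>i\<in>UNIV. \<Sum>j\<in>UNIV. ?A $ i $ j * qform_pair Q i j) =
      (\<Sum>i\<in>UNIV. \<Sum>j\<in>UNIV. ?A $ i $ j * (Q $ i $ i - Q $ j $ i)) +
      (\<Sum>i\<in>UNIV. \<Sum>j\<in>UNIV. ?A $ i $ j * (Q $ j $ j - Q $ i $ j))"
    unfolding sum.distrib[symmetric] by (intro sum.cong refl) (simp add: qform_pair_eq algebra_simps)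
  ultimately show ?thesis by linarith
qed

lemma laplacian_quadratic_form:
  "2 * (x \<bullet> (laplacian E w *v x)) = (\<Sum>i\<in>UNIV. \<Sum>j\<in>UNIV. adj_matrix E w $ i $ j * (x $ i - x $ j)\<^sup>2)"
proof -
  let ?A = "adj_matrix E w"
  have "x \<bullet> (laplacian E w *v x) = (\<Sum>i\<in>UNIV. x $ i * (\<Sum>j\<in>UNIV. laplacian E w $ i $ j * x $ j))"
    by (simp add: inner_vec_def matrix_vector_mult_def)
  also have "\<dots> = (\<Sum>i\<in>UNIV. \<Sum>j\<in>UNIV. ?A $ i $ j * (x $ i * (x $ i - x $ j)))"
    by (simp only: laplacian_row_mult sum_distrib_left) (simp add: algebra_simps)
  finally have "x \<bullet> (laplacian E w *v x) = \<dots>" .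
  moreover have "(\<Sum>i\<in>UNIV. \<Sum>j\<in>UNIV. ?A $ i $ j * (x $ j * (x $ j - x $ i))) =
      (\<Sum>i\<in>UNIV. \<Sum>j\<in>UNIV. ?A $ i $ j * (x $ i * (x $ i - x $ j)))"
    by (rule sum_adj_matrix_swap)
  moreover have "(\<Sum>i\<in>UNIV. \<Sum>j\<in>UNIV. ?A $ i $ j * (x $ i - x $ j)\<^sup>2) =
      (\<Sum>i\<in>UNIV. \<Sum>j\<in>UNIV. ?A $ i $ j * (x $ i * (x $ i - x $ j))) +
      (\<Sum>i\<in>UNIV. \<Sum>j\<in>UNIV. ?A $ i $ j * (x $ j * (x $ j - x $ i)))"
    unfolding sum.distrib[symmetric] by (intro sum.cong refl) (simp add: power2_eq_square algebra_simps)
  ultimately show ?thesis by linarith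
qed

lemma laplacian_kernel_const:
  assumes "wgraph E w" and "connected_graph E" and "laplacian E w *v x = 0"
  shows "x $ s = x $ t"
proof -
  let ?A = "adj_matrix E w"
  have nonneg: "0 \<le> ?A $ i $ j * (x $ i - x $ j)\<^sup>2" for i j
    using assms(1) by (auto simp: adj_matrix_def wgraph_def less_imp_le)
  have "(\<Sum>i\<in>UNIV. \<Sum>j\<in>UNIV. ?A $ i $ j * (x $ i - x $ j)\<^sup>2) = 0"
    using laplacian_quadratic_form[of x E w] assms(3) by simp
  then have zero: "?A $ i $ j * (x $ i - x $ j)\<^sup>2 = 0" for i j
    using nonneg by (simp add: sum_nonneg sum_nonneg_eq_0_iff)
  have edge: "x $ i = x $ j" if "{i, j} \<in> E" for i j
  proof -
    have "0 < ?A $ i $ j" using that assms(1) by (simp add: adj_matrix_def wgraph_def)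
    then show ?thesis using zero[of i j] by simp
  qed
  have "(\<lambda>i j. {i, j} \<in> E)\<^sup>*\<^sup>* s t"
    using assms(2) unfolding connected_graph_def by blast
  then show ?thesis by induction (auto dest: edge)
qed

lemma laplacian_plus_averaging_left_invertible:
  fixes E :: "('v::finite) set set"
  assumes "wgraph E w" and "connected_graph E"
  shows "\<exists>B. B ** (laplacian E w + averaging_matrix) = mat 1"
  unfolding matrix_left_invertible_ker
proof (intro allI impI)
  \<comment> \<open>Column sums of \<open>L\<close> vanish, so summing \<open>(L + J) x = 0\<close> over all coordinates gives
    \<open>1\<^sup>T x = 0\<close>; then \<open>L x = 0\<close>, and \<open>x\<close> is constant with zero sum.\<close>
  fix x :: "real^'v"
  let ?L = "laplacian E w" and ?n = "real CARD('v)" and ?sum = "\<Sum>j\<in>UNIV. x $ j"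
  assume "(?L + averaging_matrix) *v x = 0"
  then have "?L *v x + averaging_matrix *v x = 0" by (simp add: matrix_vector_mult_add_rdistrib)
  then have "(?L *v x) $ i + (averaging_matrix *v x) $ i = 0" for i
    by (metis vector_add_component zero_index)
  moreover have "(averaging_matrix *v x) $ i = ?sum / ?n" for i
    by (simp add: averaging_matrix_def matrix_vector_mult_def sum_divide_distrib)
  ultimately have eq: "(?L *v x) $ i = - (?sum / ?n)" for i
    by (simp add: eq_neg_iff_add_eq_0)
  have "(\<Sum>i\<in>UNIV. (?L *v x) $ i) = (\<Sum>i\<in>UNIV. \<Sum>j\<in>UNIV. ?L $ i $ j * x $ j)"
    by (simp add: matrix_vector_mult_def)
  also have "\<dots> = (\<Sum>j\<in>UNIV. (\<Sum>i\<in>UNIV. ?L $ i $ j) * x $ j)"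
    by (subst sum.swap) (simp add: sum_distrib_right)
  also have "\<dots> = 0" by (simp add: laplacian_column_sum)
  finally have "(\<Sum>i\<in>(UNIV :: 'v set). - (?sum / ?n)) = 0" by (simp only: eq)
  then have sum0: "?sum = 0" by simp
  with eq have "?L *v x = 0" by (simp add: vec_eq_iff)
  then have const: "x $ j = x $ i" for i j using laplacian_kernel_const assms by blast
  have "?sum = (\<Sum>j\<in>(UNIV :: 'v set). x $ i)" for i by (rule sum.cong[OF refl]) (rule const)
  with sum0 show "x = 0" by (simp add: vec_eq_iff)
qed

lemma pinv_laplacian:
  assumes "wgraph E w" and "connected_graph E"
  shows "moore_penrose (laplacian E w) (pinv (laplacian E w))"
    and "transpose (pinv (laplacian E w)) = pinv (laplacian E w)"
    and "pinv (laplacian E w) ** averaging_matrix = 0"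
proof -
  obtain B where "B ** (laplacian E w + averaging_matrix) = mat 1"
    using laplacian_plus_averaging_left_invertible[OF assms] by blast
  note P = moore_penrose_regularized_inverse[OF transpose_laplacian transpose_averaging_matrix
      averaging_matrix_idem laplacian_mult_averaging_matrix this]
  have pinv: "pinv (laplacian E w) = B - averaging_matrix" by (rule pinv_eqI[OF P(1)])
  show "moore_penrose (laplacian E w) (pinv (laplacian E w))" unfolding pinv by (rule P(1))
  show "transpose (pinv (laplacian E w)) = pinv (laplacian E w)" unfolding pinv by (rule P(2))
  show "pinv (laplacian E w) ** averaging_matrix = 0" unfolding pinv by (rule P(3))
qed

lemma endpoints_doubleton:
  assumes "s \<noteq> t"
  shows "endpoints {s, t} = (s, t) \<or> endpoints {s, t} = (t, s)"
proof -
  have "\<exists>p. fst p \<noteq> snd p \<and> {s, t} = {fst p, snd p}"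
    using assms by (intro exI[of _ "(s, t)"]) auto
  then have "fst (endpoints {s, t}) \<noteq> snd (endpoints {s, t}) \<and>
      {s, t} = {fst (endpoints {s, t}), snd (endpoints {s, t})}"
    unfolding endpoints_def by (rule someI_ex)
  then show ?thesis by (auto simp: doubleton_eq_iff prod_eq_iff)
qed

lemma sum_doubletons_endpoints:
  fixes g :: "'v::finite \<Rightarrow> 'v \<Rightarrow> real" and S :: "'v set set"
  assumes S: "\<forall>e\<in>S. \<exists>s t. s \<noteq> t \<and> e = {s, t}" and g: "\<And>i j. g i j = g j i"
  shows "(\<Sum>i\<in>UNIV. \<Sum>j\<in>UNIV. if {i, j} \<in> S then g i j else 0) =
    2 * (\<Sum>e\<in>S. g (fst (endpoints e)) (snd (endpoints e)))"
proof -
  define D where "D = {p :: 'v \<times> 'v. {fst p, snd p} \<in> S}"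
  have "(\<Sum>i\<in>UNIV. \<Sum>j\<in>UNIV. if {i, j} \<in> S then g i j else 0) =
      (\<Sum>p\<in>UNIV. if {fst p, snd p} \<in> S then g (fst p) (snd p) else 0)"
    by (simp add: sum.cartesian_product UNIV_Times_UNIV[symmetric] case_prod_beta
        del: UNIV_Times_UNIV)
  also have "\<dots> = (\<Sum>p\<in>D. g (fst p) (snd p))"
    unfolding D_def by (simp add: sum.inter_filter[symmetric])
  also have "\<dots> = (\<Sum>e\<in>S. \<Sum>p\<in>{p\<in>D. {fst p, snd p} = e}. g (fst p) (snd p))"
    by (rule sum.group[OF finite finite, symmetric]) (auto simp: D_def)
  also have "\<dots> = (\<Sum>e\<in>S. 2 * g (fst (endpoints e)) (snd (endpoints e)))"
  proof (rule sum.cong[OF refl])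
    fix e assume "e \<in> S"
    then obtain s t where st: "s \<noteq> t" "e = {s, t}" using S by blast
    have "{p\<in>D. {fst p, snd p} = e} = {(s, t), (t, s)}"
    proof (rule set_eqI)
      fix p :: "'v \<times> 'v"
      have "{fst p, snd p} = {s, t} \<longleftrightarrow> p = (s, t) \<or> p = (t, s)"
        by (cases p) (auto simp: doubleton_eq_iff)
      then show "p \<in> {p\<in>D. {fst p, snd p} = e} \<longleftrightarrow> p \<in> {(s, t), (t, s)}"
        using \<open>e \<in> S\<close> st(2) by (auto simp: D_def)
    qed
    moreover have "g (fst (endpoints e)) (snd (endpoints e)) = g s t"
      using endpoints_doubleton[OF st(1)] st(2) g[of t s] by auto
    ultimately show "(\<Sum>p\<in>{p\<in>D. {fst p, snd p} = e}. g (fst p) (snd p)) =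
        2 * g (fst (endpoints e)) (snd (endpoints e))"
      using st(1) g[of t s] by simp
  qed
  finally show ?thesis by (simp add: sum_distrib_left)
qed

lemma qform_pair_commute: "qform_pair M s t = qform_pair M t s"
  by (simp add: qform_pair_eq)

lemma qform_pair_self: "qform_pair M s s = 0"
  by (simp add: qform_pair_eq)

lemma qform_pair_square_nonneg:
  assumes "transpose P = P"
  shows "0 \<le> qform_pair (P ** P) s t"
proof -
  define b where "b = indicator_vec s - indicator_vec t"
  have "qform_pair (P ** P) s t = b \<bullet> (P *v (P *v b))"
    unfolding qform_pair_def b_def by (simp add: matrix_vector_mul_assoc)
  also have "\<dots> = (b v* P) \<bullet> (P *v b)" by (simp add: dot_lmul_matrix)
  also have "b v* P = P *v b" by (metis assms transpose_matrix_vector)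
  finally show ?thesis by simp
qed

lemma sum_qform_pair:
  fixes M :: "real^'n^'n"
  shows "(\<Sum>i\<in>UNIV. \<Sum>j\<in>UNIV. qform_pair M i j) =
    2 * (real CARD('n) * trace M - (\<Sum>i\<in>UNIV. \<Sum>j\<in>UNIV. M $ i $ j))"
proof -
  have split: "(\<Sum>i\<in>UNIV. \<Sum>j\<in>UNIV. qform_pair M i j) =
      (\<Sum>i\<in>UNIV. \<Sum>j\<in>(UNIV :: 'n set). M $ i $ i) - (\<Sum>i\<in>UNIV. \<Sum>j\<in>UNIV. M $ i $ j) -
      (\<Sum>i\<in>UNIV. \<Sum>j\<in>UNIV. M $ j $ i) + (\<Sum>i\<in>(UNIV :: 'n set). \<Sum>j\<in>UNIV. M $ j $ j)"
    by (simp only: qform_pair_eq sum.distrib sum_subtractf)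
  have diag1: "(\<Sum>i\<in>UNIV. \<Sum>j\<in>(UNIV :: 'n set). M $ i $ i) = real CARD('n) * trace M"
    by (simp add: trace_def sum_distrib_left)
  have diag2: "(\<Sum>i\<in>(UNIV :: 'n set). \<Sum>j\<in>UNIV. M $ j $ j) = real CARD('n) * trace M"
    by (simp add: trace_def)
  have swap: "(\<Sum>i\<in>UNIV. \<Sum>j\<in>UNIV. M $ j $ i) = (\<Sum>i\<in>UNIV. \<Sum>j\<in>UNIV. M $ i $ j)"
    by (rule sum.swap)
  show ?thesis unfolding split diag1 diag2 swap by simp
qed

lemma total_res_eq_trace_pinv:
  fixes E :: "('v::finite) set set"
  assumes "wgraph E w" and "connected_graph E"
  shows "total_res E w = real CARD('v) * trace (pinv (laplacian E w))"
proof -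
  let ?P = "pinv (laplacian E w)" and ?S = "{{s, t} | s t :: 'v. s \<noteq> t}"
  have S: "\<forall>e\<in>?S. \<exists>s t. s \<noteq> t \<and> e = {s, t}" by blast
  have mem: "{i, j} \<in> ?S \<longleftrightarrow> i \<noteq> j" for i j by (auto simp: doubleton_eq_iff)
  have rows: "(\<Sum>j\<in>UNIV. ?P $ i $ j) = 0" for i
    by (rule row_sum_eq_0_if_mult_averaging_matrix[OF pinv_laplacian(3)[OF assms]])
  have "2 * total_res E w = 2 * (\<Sum>e\<in>?S. qform_pair ?P (fst (endpoints e)) (snd (endpoints e)))"
    unfolding total_res_def eff_res_def ..
  also have "\<dots> = (\<Sum>i\<in>UNIV. \<Sum>j\<in>UNIV. if {i, j} \<in> ?S then qform_pair ?P i j else 0)"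
    by (rule sum_doubletons_endpoints[OF S qform_pair_commute, symmetric])
  also have "\<dots> = (\<Sum>i\<in>UNIV. \<Sum>j\<in>UNIV. qform_pair ?P i j)"
    unfolding mem by (intro sum.cong refl) (simp add: qform_pair_self)
  also have "\<dots> = 2 * (real CARD('v) * trace ?P)"
    by (simp add: sum_qform_pair rows)
  finally show ?thesis by simp
qed

lemma sum_edges_biharm_sq_eq_trace_pinv:
  assumes "wgraph E w" and "connected_graph E"
  shows "(\<Sum>e\<in>E. w e * (biharm_edge E w e)\<^sup>2) = trace (pinv (laplacian E w))"
proof -
  let ?L = "laplacian E w" and ?P = "pinv (laplacian E w)"
  define g where "g i j = w {i, j} * qform_pair (?P ** ?P) i j" for i j
  have E: "\<forall>e\<in>E. \<exists>s t. s \<noteq> t \<and> e = {s, t}" using assms(1) by (simp add: wgraph_def)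
  have g_commute: "g i j = g j i" for i j
    by (simp only: g_def insert_commute[of i j] qform_pair_commute[of _ i j])
  have edge_term: "w e * (biharm_edge E w e)\<^sup>2 = g (fst (endpoints e)) (snd (endpoints e))"
    if "e \<in> E" for e
  proof -
    from \<open>e \<in> E\<close> obtain s t where st: "s \<noteq> t" "e = {s, t}" using E by blast
    from endpoints_doubleton[OF st(1)] have e: "{fst (endpoints e), snd (endpoints e)} = e"
      unfolding st(2) by (elim disjE) (simp_all add: insert_commute)
    have "0 \<le> qform_pair (?P ** ?P) (fst (endpoints e)) (snd (endpoints e))"
      by (rule qform_pair_square_nonneg[OF pinv_laplacian(2)[OF assms]])
    then show ?thesis by (simp add: g_def biharm_edge_def biharm_def e)
  qed
  have "trace (?L ** (?P ** ?P)) = trace ((?L ** ?P) ** ?P)" by (simp only: matrix_mul_assoc)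
  also have "\<dots> = trace (?P ** (?L ** ?P))" by (rule trace_mul_sym)
  also have "\<dots> = trace ?P"
    using pinv_laplacian(1)[OF assms] by (simp add: moore_penrose_def matrix_mul_assoc)
  finally have trace_LPP: "trace (?L ** (?P ** ?P)) = trace ?P" .
  have "2 * (\<Sum>e\<in>E. w e * (biharm_edge E w e)\<^sup>2) =
      2 * (\<Sum>e\<in>E. g (fst (endpoints e)) (snd (endpoints e)))"
    using edge_term by simp
  also have "\<dots> = (\<Sum>i\<in>UNIV. \<Sum>j\<in>UNIV. if {i, j} \<in> E then g i j else 0)"
    by (rule sum_doubletons_endpoints[OF E g_commute, symmetric])
  also have "\<dots> = (\<Sum>i\<in>UNIV. \<Sum>j\<in>UNIV. adj_matrix E w $ i $ j * qform_pair (?P ** ?P) i j)"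
    by (intro sum.cong refl) (simp add: g_def adj_matrix_def)
  also have "\<dots> = 2 * trace ?P"
    by (simp only: trace_laplacian_mult[symmetric] trace_LPP)
  finally show ?thesis by simp
qed

theorem corollary4p3:
  fixes E :: "('v::finite) set set" and w :: "'v set \<Rightarrow> real"
  assumes "wgraph E w" and "connected_graph E"
  shows "real CARD('v) * (\<Sum>e\<in>E. w e * (biharm_edge E w e)\<^sup>2) = total_res E w"
  using sum_edges_biharm_sq_eq_trace_pinv[OF assms] total_res_eq_trace_pinv[OF assms] by simp

end
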